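(* Let $\mathcal G=(\mathcal V,\mathcal E)$ be a directed graph and $\mathcal N=\{1,\dots,N\}$ a finite set of vehicles, with the deterministic platoon coordination setting described in the context (fixed travel times $\tau(e,t)\in\mathbb Z_+$, start times $\tau_0^i$, paths, finite action sets $\mathcal W^i$, reward function $R$, waiting costs $\Lambda_i$, and utilities $U^i$). Then the game $G^d=(\mathcal N,\mathcal W,\{U^i\}_{i\in\mathcal N})$ with $\mathcal W=\mathcal W^1\times\dots\times\mathcal W^N$ is an exact potential game with potential function $$\Phi(\boldsymbol w,\tau)=\sum_{t\in\mathbb Z_+}\sum_{e\in\mathcal E} r\big(|C(e,t,\boldsymbol w,\tau)|,e\big)-\sum_{i\in\mathcal N}\Lambda_i(\boldsymbol w^i),\qquad r(n,e)=\sum_{j=1}^{n}R(j,e)\ (\text{so } r(0,e)=0),$$ i.e. for every $i\in\mathcal N$, all $\boldsymbol w^{i\prime},\boldsymbol w^{i\prime\prime}\in\mathcal W^i$ and all $\boldsymbol w^{-i}\in\prod_{j\neq i}\mathcal W^j$, $$\Phi(\boldsymbol w^{i\prime},\boldsymbol w^{-i},\tau)-\Phi(\boldsymbol w^{i\prime\prime},\boldsymbol w^{-i},\tau)=U^i(\boldsymbol w^{i\prime},\boldsymbol w^{-i},\tau)-U^i(\boldsymbol w^{i\prime\prime},\boldsymbol w^{-i},\tau).$$ Consequently $G^d$ admits at least one pure Nash equilibrium, i.e. a profile $\boldsymbol w^\star\in\mathcal W$ with $U^i(\boldsymbol w^{\star i},\boldsymbol w^{\star,-i},\tau)\ge U^i(\boldsymbol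 w^i,\boldsymbol w^{\star,-i},\tau)$ for all $i$ and all $\boldsymbol w^i\in\mathcal W^i$.
   Context: Setting (deterministic platoon coordination). A road network is a directed graph $\mathcal G=(\mathcal V,\mathcal E)$; nodes are hubs where vehicles may wait. For each edge $e\in\mathcal E$ and time $t\in\mathbb Z_+$, $\tau(e,t)\in\mathbb Z_+$ is the (known) travel time on $e$ for a vehicle entering $e$ at time $t$. Each vehicle $i\in\mathcal N=\{1,\dots,N\}$ has a fixed path consisting of edges $e^i_1,\dots,e^i_{|\mathcal P^i|}$ (the set of edges being $\mathcal P^i$), where edge $e^i_k$ goes from node $v^i_k$ to node $v^i_{k+1}$, and a start time $\tau_0^i\in\mathbb Z_+$ at which it arrives at $v^i_1$. $\tau$ denotes the collection of all $\tau(e,t)$ and all $\tau^i_0$. Vehicle $i$'s action is a vector of waiting times $\boldsymbol w^i=(w^i_1,\dots,w^i_{|\mathcal P^i|})$, $w^i_k\in\mathbb Z_+$ being the waiting time at node $v^i_k$, chosen from a finite set $\mathcal W^i$; $\boldsymbol w=(\boldsymbol w^1,\dots,\boldsymbol w^N)$ and $\boldsymbol w^{-i}$ denotes the actions of all vehicles except $i$. Departure times are $t^i_1=\tau_0^i+w^i_1$ and $t^i_{k+1}=w^i_{k+1}+t^i_k+\tau(e^i_k,t^i_k)$; $t^i_k$ is the time vehicle $i$ leaves $v^i_k$ and enters $e^i_k$. For $e\in\mathcal E$, $t\in\mathbb Z_+$, let $C(e,t,\boldsymbol w,\tau)=\{i\in\mathcal N: \exists k,\ e^i_k=e,\ t^i_k=t\}$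 be the set of vehicles entering $e$ at time $t$ (they form a platoon). $R:\mathbb Z_{\ge1}\times\mathcal E\to\mathbb R$ gives the platooning reward $R(n,e)$ of each vehicle traversing $e$ in a platoon of $n$ vehicles, and $\Lambda_i:\mathcal W^i\to\mathbb R$ is vehicle $i$'s waiting cost. The utility of vehicle $i$ is $$U^i(\boldsymbol w^i,\boldsymbol w^{-i},\tau)=\sum_{k=1}^{|\mathcal P^i|}R\big(|C(e^i_k,t^i_k,\boldsymbol w,\tau)|,e^i_k\big)-\Lambda_i(\boldsymbol w^i).$$ The game $G^d$ has players $\mathcal N$, action sets $\mathcal W^i$, and payoffs $U^i(\cdot,\tau)$, each player maximizing its own payoff. *)

theory Defs
  imports "HOL-Analysis.Analysis"
begin

(* Edges of the directed graph are pairs (u,v) of nodes.  Time is nat (= Z_+).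
   Vehicles are 1..N.  Lists are 0-indexed: entry k of a list is the paper's index k+1. *)

definition is_digraph :: "'v set \<Rightarrow> ('v \<times> 'v) set \<Rightarrow> bool" where
  "is_digraph V E \<longleftrightarrow> E \<subseteq> V \<times> V"

definition is_path :: "('v \<times> 'v) set \<Rightarrow> ('v \<times> 'v) list \<Rightarrow> bool" where
  "is_path E p \<longleftrightarrow> set p \<subseteq> E \<and> distinct p \<and>
     (\<forall>k. Suc k < length p \<longrightarrow> snd (p ! k) = fst (p ! Suc k))"

(* departure times: s = arrival time at the current node;
   t_1 = tau0 + w_1,  t_{k+1} = w_{k+1} + t_k + tau(e_k, t_k) *)
fun dep_times :: "('e \<Rightarrow> nat \<Rightarrow> nat) \<Rightarrow> nat \<Rightarrow> 'e list \<Rightarrow> nat list \<Rightarrow> nat list" where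
  "dep_times tt s (e # es) (x # xs) = (let t = x + s in t # dep_times tt (t + tt e t) es xs)"
| "dep_times tt s _ _ = []"

definition dep :: "('e \<Rightarrow> nat \<Rightarrow> nat) \<Rightarrow> (nat \<Rightarrow> nat) \<Rightarrow> (nat \<Rightarrow> 'e list)
                   \<Rightarrow> (nat \<Rightarrow> nat list) \<Rightarrow> nat \<Rightarrow> nat list" where
  "dep tt tau0 pth w i = dep_times tt (tau0 i) (pth i) (w i)"

definition platoon :: "nat \<Rightarrow> ('e \<Rightarrow> nat \<Rightarrow> nat) \<Rightarrow> (nat \<Rightarrow> nat) \<Rightarrow> (nat \<Rightarrow> 'e list)
                   \<Rightarrow> 'e \<Rightarrow> nat \<Rightarrow> (nat \<Rightarrow> nat list) \<Rightarrow> nat set" where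
  "platoon N tt tau0 pth e t w =
     {i \<in> {1..N}. \<exists>k < length (pth i). pth i ! k = e \<and> dep tt tau0 pth w i ! k = t}"

definition utility :: "nat \<Rightarrow> ('e \<Rightarrow> nat \<Rightarrow> nat) \<Rightarrow> (nat \<Rightarrow> nat) \<Rightarrow> (nat \<Rightarrow> 'e list)
                   \<Rightarrow> (nat \<Rightarrow> 'e \<Rightarrow> real) \<Rightarrow> (nat \<Rightarrow> nat list \<Rightarrow> real)
                   \<Rightarrow> nat \<Rightarrow> (nat \<Rightarrow> nat list) \<Rightarrow> real" where
  "utility N tt tau0 pth R Lam i w =
     (\<Sum>k < length (pth i).
        R (card (platoon N tt tau0 pth (pth i ! k) (dep tt tau0 pth w i ! k) w)) (pth i ! k))
     - Lam i (w i)"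

definition cumR :: "(nat \<Rightarrow> 'e \<Rightarrow> real) \<Rightarrow> nat \<Rightarrow> 'e \<Rightarrow> real" where
  "cumR R n e = (\<Sum>j = 1..n. R j e)"

definition potential :: "nat \<Rightarrow> 'e set \<Rightarrow> ('e \<Rightarrow> nat \<Rightarrow> nat) \<Rightarrow> (nat \<Rightarrow> nat) \<Rightarrow> (nat \<Rightarrow> 'e list)
                   \<Rightarrow> (nat \<Rightarrow> 'e \<Rightarrow> real) \<Rightarrow> (nat \<Rightarrow> nat list \<Rightarrow> real)
                   \<Rightarrow> (nat \<Rightarrow> nat list) \<Rightarrow> real" where
  "potential N E tt tau0 pth R Lam w =
     (\<Sum>\<^sub>\<infinity> t \<in> (UNIV :: nat set). \<Sum>\<^sub>\<infinity> e \<in> E.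
         cumR R (card (platoon N tt tau0 pth e t w)) e)
     - (\<Sum>i \<in> {1..N}. Lam i (w i))"

definition exact_potential_game ::
  "nat \<Rightarrow> (nat \<Rightarrow> 'a set) \<Rightarrow> (nat \<Rightarrow> (nat \<Rightarrow> 'a) \<Rightarrow> real) \<Rightarrow> ((nat \<Rightarrow> 'a) \<Rightarrow> real) \<Rightarrow> bool" where
  "exact_potential_game N W U Phi \<longleftrightarrow>
     (\<forall>i \<in> {1..N}. \<forall>a \<in> W i. \<forall>b \<in> W i. \<forall>w \<in> Pi ({1..N} - {i}) W.
        Phi (w(i := a)) - Phi (w(i := b)) = U i (w(i := a)) - U i (w(i := b)))"

definition pure_nash_eq ::
  "nat \<Rightarrow> (nat \<Rightarrow> 'a set) \<Rightarrow> (nat \<Rightarrow> (nat \<Rightarrow> 'a) \<Rightarrow> real) \<Rightarrow> (nat \<Rightarrow> 'a) \<Rightarrow> bool" where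
  "pure_nash_eq N W U ws \<longleftrightarrow> ws \<in> Pi {1..N} W \<and>
     (\<forall>i \<in> {1..N}. \<forall>a \<in> W i. U i ws \<ge> U i (ws(i := a)))"

end

theory Submission
  imports Defs
begin

(* This is Rosenthal's argument for congestion games, the resources being the pairs
  (edge, entry time); only finitely many of them carry a nonempty platoon, so the infinite
  sums in Phi are finite. Adding vehicle i to a platoon of n others raises the cumulative
  reward r(n, e) by exactly R(n + 1, e), which is what i itself receives on that edge, and
  as a path never repeats an edge, i occupies each resource at most once. Hence Phi - U^i
  only involves the platoons with i removed and the other vehicles' waiting costs, neither
  of which depends on the action of i. A maximiser of Phi over the finite set of profiles
  is then a pure Nash equilibrium. *)

lemma exact_potential_gameI:
  assumes "\<And>i a b w. i \<in> {1..N} \<Longrightarrow> a \<in> W i \<Longrightarrow> b \<in> W i \<Longrightarrow> w \<in> Pi ({1..N} - {i}) W \<Longrightarrow>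
             Phi (w(i := a)) - U i (w(i := a)) = Phi (w(i := b)) - U i (w(i := b))"
  shows "exact_potential_game N W U Phi"
  unfolding exact_potential_game_def
proof (intro ballI)
  fix i a b w
  assume "i \<in> {1..N}" "a \<in> W i" "b \<in> W i" "w \<in> Pi ({1..N} - {i}) W"
  from assms[OF this] show "Phi (w(i := a)) - Phi (w(i := b)) = U i (w(i := a)) - U i (w(i := b))"
    by linarith
qed

lemma exact_potential_game_has_pure_nash_eq:
  assumes epg: "exact_potential_game N W U Phi"
    and W: "\<forall>i \<in> {1..N}. finite (W i) \<and> W i \<noteq> {}"
  shows "\<exists>ws. pure_nash_eq N W U ws"
proof -
  define A where "A = Pi\<^sub>E {1..N} W"
  have "finite A" "A \<noteq> {}"
    using W unfolding A_def by (auto intro!: finite_PiE simp: PiE_eq_empty_iff)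
  then have "Max (Phi ` A) \<in> Phi ` A"
    by simp
  then obtain ws where ws: "ws \<in> A" "Phi ws = Max (Phi ` A)"
    by auto
  then have max: "\<And>w. w \<in> A \<Longrightarrow> Phi w \<le> Phi ws"
    using \<open>finite A\<close> by simp
  have "U i (ws(i := a)) \<le> U i ws" if i: "i \<in> {1..N}" and a: "a \<in> W i" for i a
  proof -
    have "ws(i := a) \<in> A"
      using ws i a unfolding A_def by (auto simp: PiE_def extensional_def)
    then have "Phi (ws(i := a)) \<le> Phi (ws(i := ws i))"
      using max by simp
    moreover have "ws i \<in> W i" "ws \<in> Pi ({1..N} - {i}) W"
      using ws i unfolding A_def by auto
    ultimately show ?thesis
      using epg i a unfolding exact_potential_game_def by fastforce
  qed
  moreover have "ws \<in> Pi {1..N} W"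
    using ws unfolding A_def by auto
  ultimately show ?thesis
    unfolding pure_nash_eq_def by blast
qed

lemma cumR_card_Diff:
  assumes "finite C" "i \<in> C"
  shows "cumR R (card C) e = cumR R (card (C - {i})) e + R (card C) e"
proof -
  from card_Suc_Diff1[OF assms, symmetric] show ?thesis
    unfolding cumR_def by (simp add: sum.cl_ivl_Suc)
qed

lemma sum_cumR_card_Diff:
  assumes "finite P" "\<And>e t. (e, t) \<in> P \<Longrightarrow> finite (C e t)"
  shows "(\<Sum>(e, t) \<in> P. cumR R (card (C e t)) e) =
           (\<Sum>(e, t) \<in> P. cumR R (card (C e t - {i})) e)
         + (\<Sum>(e, t) \<in> {(e, t) \<in> P. i \<in> C e t}. R (card (C e t)) e)"
proof -
  have "(\<Sum>(e, t) \<in> P. cumR R (card (C e t)) e) =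
          (\<Sum>(e, t) \<in> P. cumR R (card (C e t - {i})) e
                          + (if i \<in> C e t then R (card (C e t)) e else 0))"
    using assms(2) by (intro sum.cong) (auto simp: cumR_card_Diff)
  also have "\<dots> = (\<Sum>(e, t) \<in> P. cumR R (card (C e t - {i})) e)
                 + (\<Sum>(e, t) \<in> {(e, t) \<in> P. i \<in> C e t}. R (card (C e t)) e)"
    using assms(1)
    by (simp add: sum.distrib split_def sum.inter_filter[symmetric] case_prod_unfold)
  finally show ?thesis .
qed

lemma infsum_eq_sum_superset:
  assumes "finite F" "F \<subseteq> A" "\<And>x. x \<in> A - F \<Longrightarrow> f x = 0"
  shows "infsum f A = sum f F"
proof -
  have "infsum f A = infsum f F"
    using assms(2,3) by (intro infsum_cong_neutral) auto
  with assms(1) show ?thesis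
    by simp
qed

definition entries :: "('e \<Rightarrow> nat \<Rightarrow> nat) \<Rightarrow> (nat \<Rightarrow> nat) \<Rightarrow> (nat \<Rightarrow> 'e list)
                       \<Rightarrow> (nat \<Rightarrow> nat list) \<Rightarrow> nat \<Rightarrow> ('e \<times> nat) set" where
  "entries tt tau0 pth w i = (\<lambda>k. (pth i ! k, dep tt tau0 pth w i ! k)) ` {..<length (pth i)}"

lemma finite_entries: "finite (entries tt tau0 pth w i)"
  by (simp add: entries_def)

lemma platoon_eq_entries:
  "platoon N tt tau0 pth e t w = {j \<in> {1..N}. (e, t) \<in> entries tt tau0 pth w j}"
  unfolding platoon_def entries_def by auto

lemma platoon_fun_upd_Diff:
  "platoon N tt tau0 pth e t (w(i := a)) - {i} = platoon N tt tau0 pth e t w - {i}"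
  unfolding platoon_def dep_def by auto

lemma sum_entries:
  assumes "distinct (pth i)"
  shows "(\<Sum>(e, t) \<in> entries tt tau0 pth w i. g e t) =
           (\<Sum>k < length (pth i). g (pth i ! k) (dep tt tau0 pth w i ! k))"
proof -
  have "inj_on (\<lambda>k. (pth i ! k, dep tt tau0 pth w i ! k)) {..<length (pth i)}"
    using assms by (auto simp: inj_on_def nth_eq_iff_index_eq)
  then show ?thesis
    unfolding entries_def by (simp add: sum.reindex)
qed

lemma potential_eq_sum:
  assumes F: "finite F" "F \<subseteq> E" and T: "finite T"
    and entries: "\<forall>j \<in> {1..N}. entries tt tau0 pth w j \<subseteq> F \<times> T"
  shows "potential N E tt tau0 pth R Lam w =
           (\<Sum>(e, t) \<in> F \<times> T. cumR R (card (platoon N tt tau0 pth e t w)) e)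
         - (\<Sum>j \<in> {1..N}. Lam j (w j))"
proof -
  let ?r = "\<lambda>e t. cumR R (card (platoon N tt tau0 pth e t w)) e"
  have vanish: "?r e t = 0" if "(e, t) \<notin> F \<times> T" for e t
  proof -
    have "platoon N tt tau0 pth e t w = {}"
      using that entries unfolding platoon_eq_entries by auto
    then show ?thesis
      by (simp add: cumR_def)
  qed
  have "(\<Sum>\<^sub>\<infinity>e \<in> E. ?r e t) = (\<Sum>e \<in> F. ?r e t)" for t
    using F vanish by (intro infsum_eq_sum_superset) auto
  moreover have "(\<Sum>\<^sub>\<infinity>t \<in> UNIV. \<Sum>e \<in> F. ?r e t) = (\<Sum>t \<in> T. \<Sum>e \<in> F. ?r e t)"
    using T vanish by (intro infsum_eq_sum_superset) auto
  moreover have "(\<Sum>t \<in> T. \<Sum>e \<in> F. ?r e t) = (\<Sum>(e, t) \<in> F \<times> T. ?r e t)"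
    by (subst sum.swap) (simp add: sum.cartesian_product)
  ultimately show ?thesis
    unfolding potential_def by simp
qed

lemma potential_minus_utility:
  assumes F: "finite F" "F \<subseteq> E" and T: "finite T"
    and entries: "\<forall>j \<in> {1..N}. entries tt tau0 pth w j \<subseteq> F \<times> T"
    and i: "i \<in> {1..N}" and distinct: "distinct (pth i)"
  shows "potential N E tt tau0 pth R Lam w - utility N tt tau0 pth R Lam i w =
           (\<Sum>(e, t) \<in> F \<times> T. cumR R (card (platoon N tt tau0 pth e t w - {i})) e)
         - (\<Sum>j \<in> {1..N} - {i}. Lam j (w j))"
proof -
  let ?C = "\<lambda>e t. platoon N tt tau0 pth e t w"
  have "{(e, t) \<in> F \<times> T. i \<in> ?C e t} = entries tt tau0 pth w i"
    using entries i unfolding platoon_eq_entries by auto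
  then have "(\<Sum>(e, t) \<in> F \<times> T. cumR R (card (?C e t)) e) =
               (\<Sum>(e, t) \<in> F \<times> T. cumR R (card (?C e t - {i})) e)
             + (\<Sum>k < length (pth i). R (card (?C (pth i ! k) (dep tt tau0 pth w i ! k))) (pth i ! k))"
    using sum_cumR_card_Diff[of "F \<times> T" ?C R i] F T distinct
    by (simp add: sum_entries platoon_def)
  moreover have "(\<Sum>j \<in> {1..N}. Lam j (w j)) = Lam i (w i) + (\<Sum>j \<in> {1..N} - {i}. Lam j (w j))"
    using i by (simp add: sum.remove)
  ultimately show ?thesis
    unfolding potential_eq_sum[OF F T entries] utility_def by simp
qed

lemma exact_potential_game_platoon:
  assumes paths: "\<forall>j \<in> {1..N}. set (pth j) \<subseteq> E \<and> distinct (pth j)"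
  shows "exact_potential_game N W (utility N tt tau0 pth R Lam) (potential N E tt tau0 pth R Lam)"
proof (rule exact_potential_gameI)
  fix i a b and w :: "nat \<Rightarrow> nat list"
  assume i: "i \<in> {1..N}"
  define F where "F = (\<Union>j \<in> {1..N}. set (pth j))"
  define T where "T = snd ` (\<Union>j \<in> {1..N}. \<Union>w' \<in> {w(i := a), w(i := b)}. entries tt tau0 pth w' j)"
  have F: "finite F" "F \<subseteq> E" and T: "finite T"
    using paths by (auto simp: F_def T_def finite_entries)
  have entries: "\<forall>j \<in> {1..N}. entries tt tau0 pth (w(i := c)) j \<subseteq> F \<times> T" if "c \<in> {a, b}" for c
  proof (intro ballI subsetI)
    fix j x assume j: "j \<in> {1..N}" and x: "x \<in> entries tt tau0 pth (w(i := c)) j"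
    then have "fst x \<in> F"
      by (auto simp: F_def entries_def intro!: bexI[of _ j])
    moreover have "snd x \<in> T"
      using that j x unfolding T_def by blast
    ultimately show "x \<in> F \<times> T"
      by (simp add: mem_Times_iff)
  qed
  have "potential N E tt tau0 pth R Lam (w(i := c)) - utility N tt tau0 pth R Lam i (w(i := c)) =
          (\<Sum>(e, t) \<in> F \<times> T. cumR R (card (platoon N tt tau0 pth e t w - {i})) e)
        - (\<Sum>j \<in> {1..N} - {i}. Lam j (w j))" if "c \<in> {a, b}" for c
  proof -
    have "(\<Sum>j \<in> {1..N} - {i}. Lam j ((w(i := c)) j)) = (\<Sum>j \<in> {1..N} - {i}. Lam j (w j))"
      by (intro sum.cong) auto
    then show ?thesis
      using paths i
      by (simp add: potential_minus_utility[OF F T entries[OF that] i] platoon_fun_upd_Diff)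
  qed
  then show "potential N E tt tau0 pth R Lam (w(i := a)) - utility N tt tau0 pth R Lam i (w(i := a)) =
        potential N E tt tau0 pth R Lam (w(i := b)) - utility N tt tau0 pth R Lam i (w(i := b))"
    by simp
qed

theorem theorem1:
  fixes V :: "'v set" and E :: "('v \<times> 'v) set" and N :: nat
    and tt :: "('v \<times> 'v) \<Rightarrow> nat \<Rightarrow> nat" and tau0 :: "nat \<Rightarrow> nat"
    and pth :: "nat \<Rightarrow> ('v \<times> 'v) list" and W :: "nat \<Rightarrow> nat list set"
    and R :: "nat \<Rightarrow> ('v \<times> 'v) \<Rightarrow> real" and Lam :: "nat \<Rightarrow> nat list \<Rightarrow> real"
  assumes "is_digraph V E"
    and "\<forall>i \<in> {1..N}. is_path E (pth i)"
    and "\<forall>i \<in> {1..N}. finite (W i) \<and> W i \<noteq> {}"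
    and "\<forall>i \<in> {1..N}. \<forall>a \<in> W i. length a = length (pth i)"
  shows "exact_potential_game N W (utility N tt tau0 pth R Lam)
           (potential N E tt tau0 pth R Lam)
       \<and> (\<exists>ws. pure_nash_eq N W (utility N tt tau0 pth R Lam) ws)"
proof -
  have "exact_potential_game N W (utility N tt tau0 pth R Lam) (potential N E tt tau0 pth R Lam)"
    using assms(2) by (intro exact_potential_game_platoon) (auto simp: is_path_def)
  with assms(3) show ?thesis
    using exact_potential_game_has_pure_nash_eq by blast
qed

end
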